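(* Let $k \geq 1$ be an integer and $\alpha, \beta \in (0,1)$. Let $K = 12k/(\alpha^2 \beta)$ and $p = p(n) \geq (K \log n / n)^{1/k}$. Then with high probability the random graph $\Gamma \sim G(n,p)$ has the following property: for every vertex set $X$ with $|X| \geq \beta n$, there exists a set $Y \subseteq V(\Gamma) \setminus X$ with $|Y| \leq K/p^{k}$ such that every $k$-element set $S \subseteq V(\Gamma) \setminus (X \cup Y)$ satisfies $(1-\alpha) p^k |X| \leq \deg^*(S, X) \leq (1+\alpha) p^k |X|$.
   Context: $G(n,p)$ is the binomial random graph on $n$ vertices in which each pair of vertices is an edge independently with probability $p$. "With high probability" means with probability tending to $1$ as $n \to \infty$. For a vertex set $S$ and a vertex set $X$, $\deg^*(S,X)$ is the number of vertices of $X$ adjacent in $\Gamma$ to every vertex of $S$ (the size of the common neighbourhood of $S$ in $X$). $\log$ is the natural logarithm. *)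

theory Defs
  imports Complex_Main
begin

text \<open>Graphs on the vertex set {0..<n} are represented by their edge sets,
  i.e. sets of 2-element subsets of {0..<n}.\<close>

definition all_edges :: "nat \<Rightarrow> nat set set" where
  "all_edges n = {e. e \<subseteq> {..<n} \<and> card e = 2}"

text \<open>Probability that the binomial random graph G(n,p) satisfies property P:
  each of the possible edges is present independently with probability p.\<close>

definition gnp_prob :: "nat \<Rightarrow> real \<Rightarrow> (nat set set \<Rightarrow> bool) \<Rightarrow> real" where
  "gnp_prob n p P =
     (\<Sum>E\<in>Pow (all_edges n).
        (if P E then p ^ card E * (1 - p) ^ (card (all_edges n) - card E) else 0))"

definition codeg :: "nat set set \<Rightarrow> nat set \<Rightarrow> nat set \<Rightarrow> nat" where
  "codeg E S X = card {x \<in> X. \<forall>s\<in>S. {s, x} \<in> E}"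

definition lemma4p4_property ::
  "nat \<Rightarrow> nat \<Rightarrow> real \<Rightarrow> real \<Rightarrow> real \<Rightarrow> real \<Rightarrow> nat set set \<Rightarrow> bool" where
  "lemma4p4_property n k \<alpha> \<beta> K p E \<longleftrightarrow>
     (\<forall>X. X \<subseteq> {..<n} \<and> real (card X) \<ge> \<beta> * real n \<longrightarrow>
        (\<exists>Y. Y \<subseteq> {..<n} - X \<and> real (card Y) \<le> K / p ^ k \<and>
           (\<forall>S. S \<subseteq> {..<n} - (X \<union> Y) \<and> card S = k \<longrightarrow>
              (1 - \<alpha>) * p ^ k * real (card X) \<le> real (codeg E S X) \<and>
              real (codeg E S X) \<le> (1 + \<alpha>) * p ^ k * real (card X))))"

end

theory Submission
  imports Defs "HOL-Library.Disjoint_Sets" "HOL-Real_Asymp.Real_Asymp"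
begin

text \<open>
  Put \<open>\<mu> = p^k |X|\<close>. For a \<open>k\<close>-set \<open>S\<close> outside \<open>X\<close>, \<open>d = deg*(S, X)\<close> counts the
  \<open>x \<in> X\<close> whose \<open>k\<close> edges to \<open>S\<close> are all present; these events are independent, so the
  exponential weight \<open>exp (\<alpha>/2 (d - (1 + \<alpha>) \<mu>)) + exp (-\<alpha>/2 (d - (1 - \<alpha>) \<mu>))\<close>, which is
  at least 1 whenever \<open>d\<close> leaves \<open>[(1 - \<alpha>) \<mu>, (1 + \<alpha>) \<mu>]\<close>, has expectation at most
  \<open>2 exp (-\<alpha>\<^sup>2 \<mu> / 4)\<close>.

  If the property fails for some \<open>X\<close>, take a maximal family of pairwise disjoint deviating
  \<open>k\<close>-sets, capped at \<open>t = \<lfloor>K / (k p^k)\<rfloor> + 1\<close> members: if it had fewer than \<open>t\<close>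
  members, its union would be an admissible \<open>Y\<close>. Disjoint \<open>k\<close>-sets see disjoint sets of edges,
  so their weights are independent, and a union bound over at most \<open>2^n\<close> sets \<open>X\<close> and
  \<open>n^(k t)\<close> families bounds the failure probability by
  \<open>2^n n^(k t) (2 exp (-\<alpha>\<^sup>2 p^k \<beta> n / 4))^t\<close>. As \<open>t \<alpha>\<^sup>2 p^k \<beta> n / 4 > 3 n\<close> and
  \<open>t k ln n \<le> n + k ln n\<close>, this is at most \<open>exp (-(2 - 2 ln 2) n + k ln n + ln 2)\<close>.
\<close>

section \<open>Random subsets of a finite set\<close>

definition rand_expect :: "real \<Rightarrow> 'a set \<Rightarrow> ('a set \<Rightarrow> real) \<Rightarrow> real" where
  "rand_expect p A f = (\<Sum>E\<in>Pow A. p ^ card E * (1 - p) ^ (card A - card E) * f E)"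

lemma rand_expect_Un:
  assumes "finite B" "finite C" "B \<inter> C = {}"
  shows "rand_expect p (B \<union> C) f = rand_expect p B (\<lambda>E1. rand_expect p C (\<lambda>E2. f (E1 \<union> E2)))"
proof -
  let ?u = "\<lambda>(E1, E2). E1 \<union> E2"
  have inj: "inj_on ?u (Pow B \<times> Pow C)"
    using assms(3) by (auto simp: inj_on_def) blast+
  have Pow_Un: "Pow (B \<union> C) = ?u ` (Pow B \<times> Pow C)"
  proof
    show "Pow (B \<union> C) \<subseteq> ?u ` (Pow B \<times> Pow C)"
    proof
      fix E assume "E \<in> Pow (B \<union> C)"
      then have "E = ?u (E \<inter> B, E \<inter> C)" "(E \<inter> B, E \<inter> C) \<in> Pow B \<times> Pow C" by auto
      then show "E \<in> ?u ` (Pow B \<times> Pow C)" by (metis (no_types, lifting) image_eqI)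
    qed
  qed auto
  have weight: "p ^ card (E1 \<union> E2) * (1 - p) ^ (card (B \<union> C) - card (E1 \<union> E2))
      = p ^ card E1 * (1 - p) ^ (card B - card E1) * (p ^ card E2 * (1 - p) ^ (card C - card E2))"
    if "E1 \<subseteq> B" "E2 \<subseteq> C" for E1 E2
  proof -
    have "finite E1" "finite E2" "E1 \<inter> E2 = {}" using that assms by (auto intro: finite_subset)
    then have "card (E1 \<union> E2) = card E1 + card E2" by (rule card_Un_disjoint)
    moreover have "card (B \<union> C) = card B + card C" using assms by (rule card_Un_disjoint)
    moreover have "card E1 \<le> card B" "card E2 \<le> card C"
      using that assms by (auto intro: card_mono)
    ultimately have "card (B \<union> C) - card (E1 \<union> E2) = (card B - card E1) + (card C - card E2)"
      "card (E1 \<union> E2) = card E1 + card E2"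
      by simp_all
    then show ?thesis by (simp add: power_add algebra_simps)
  qed
  have "rand_expect p (B \<union> C) f = (\<Sum>(E1, E2)\<in>Pow B \<times> Pow C.
      p ^ card (E1 \<union> E2) * (1 - p) ^ (card (B \<union> C) - card (E1 \<union> E2)) * f (E1 \<union> E2))"
    unfolding rand_expect_def Pow_Un by (subst sum.reindex[OF inj]) (simp add: case_prod_unfold)
  also have "\<dots> = (\<Sum>(E1, E2)\<in>Pow B \<times> Pow C. p ^ card E1 * (1 - p) ^ (card B - card E1) *
      (p ^ card E2 * (1 - p) ^ (card C - card E2) * f (E1 \<union> E2)))"
    by (rule sum.cong) (auto simp: weight)
  also have "\<dots> = rand_expect p B (\<lambda>E1. rand_expect p C (\<lambda>E2. f (E1 \<union> E2)))"
    unfolding rand_expect_def sum.cartesian_product[symmetric] by (simp add: sum_distrib_left)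
  finally show ?thesis .
qed

lemma rand_expect_cmult: "rand_expect p A (\<lambda>E. c * f E) = c * rand_expect p A f"
  unfolding rand_expect_def sum_distrib_left by (intro sum.cong refl) (simp add: mult_ac)

lemma rand_expect_multc: "rand_expect p A (\<lambda>E. f E * c) = rand_expect p A f * c"
  using rand_expect_cmult[of p A c f] by (simp add: mult.commute)

lemma rand_expect_add: "rand_expect p A (\<lambda>E. f E + g E) = rand_expect p A f + rand_expect p A g"
  unfolding rand_expect_def by (simp add: sum.distrib algebra_simps)

lemma rand_expect_diff: "rand_expect p A (\<lambda>E. f E - g E) = rand_expect p A f - rand_expect p A g"
  unfolding rand_expect_def by (simp add: sum_subtractf algebra_simps)

lemma rand_expect_sum: "rand_expect p A (\<lambda>E. \<Sum>i\<in>I. f i E) = (\<Sum>i\<in>I. rand_expect p A (f i))"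
  unfolding rand_expect_def by (simp add: sum_distrib_left sum.swap[of _ I])

lemma rand_expect_cong:
  "(\<And>E. E \<subseteq> A \<Longrightarrow> f E = g E) \<Longrightarrow> rand_expect p A f = rand_expect p A g"
  unfolding rand_expect_def by (intro sum.cong) auto

lemma rand_expect_mono:
  assumes "0 \<le> p" "p \<le> 1" "\<And>E. E \<subseteq> A \<Longrightarrow> f E \<le> g E"
  shows "rand_expect p A f \<le> rand_expect p A g"
  unfolding rand_expect_def using assms by (intro sum_mono mult_left_mono) auto

lemma rand_expect_nonneg:
  "0 \<le> p \<Longrightarrow> p \<le> 1 \<Longrightarrow> (\<And>E. E \<subseteq> A \<Longrightarrow> 0 \<le> f E) \<Longrightarrow>
    0 \<le> rand_expect p A f"
  unfolding rand_expect_def by (intro sum_nonneg mult_nonneg_nonneg) auto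

lemma rand_expect_const:
  assumes "finite A"
  shows "rand_expect p A (\<lambda>_. c) = c"
  using assms
proof (induction A rule: finite_induct)
  case empty
  then show ?case by (simp add: rand_expect_def)
next
  case (insert a A)
  have "Pow {a} = {{}, {a}}" by auto
  then have single: "rand_expect p {a} (\<lambda>_. c) = c"
    by (simp add: rand_expect_def algebra_simps)
  have "rand_expect p ({a} \<union> A) (\<lambda>_. c) = rand_expect p {a} (\<lambda>_. rand_expect p A (\<lambda>_. c))"
    by (rule rand_expect_Un) (use insert in auto)
  then show ?case using insert single by simp
qed

lemma rand_expect_restrict:
  assumes "finite A" "B \<subseteq> A" "\<And>E. f E = f (E \<inter> B)"
  shows "rand_expect p A f = rand_expect p B f"
proof -
  have fin: "finite B" "finite (A - B)" using assms finite_subset by auto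
  have "rand_expect p A f = rand_expect p (B \<union> (A - B)) f"
    using assms(2) by (simp add: Un_absorb1)
  also have "\<dots> = rand_expect p B (\<lambda>E1. rand_expect p (A - B) (\<lambda>E2. f (E1 \<union> E2)))"
    by (rule rand_expect_Un) (use fin in auto)
  also have "\<dots> = rand_expect p B (\<lambda>E1. rand_expect p (A - B) (\<lambda>_. f E1))"
  proof (intro rand_expect_cong)
    fix E1 E2 assume "E1 \<subseteq> B" "E2 \<subseteq> A - B"
    then have "(E1 \<union> E2) \<inter> B = E1" by auto
    then show "f (E1 \<union> E2) = f E1" by (metis assms(3))
  qed
  finally show ?thesis using fin by (simp add: rand_expect_const)
qed

lemma rand_expect_mult_indep:
  assumes "finite A" "B \<subseteq> A" "\<And>E. f E = f (E \<inter> B)" "\<And>E. g E = g (E \<inter> (A - B))"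
  shows "rand_expect p A (\<lambda>E. f E * g E) = rand_expect p A f * rand_expect p A g"
proof -
  have fin: "finite B" "finite (A - B)" using assms finite_subset by auto
  have "rand_expect p A (\<lambda>E. f E * g E) = rand_expect p (B \<union> (A - B)) (\<lambda>E. f E * g E)"
    using assms(2) by (simp add: Un_absorb1)
  also have "\<dots> = rand_expect p B (\<lambda>E1. rand_expect p (A - B) (\<lambda>E2. f (E1 \<union> E2) * g (E1 \<union> E2)))"
    by (rule rand_expect_Un) (use fin in auto)
  also have "\<dots> = rand_expect p B (\<lambda>E1. rand_expect p (A - B) (\<lambda>E2. f E1 * g E2))"
  proof (intro rand_expect_cong)
    fix E1 E2 assume "E1 \<subseteq> B" "E2 \<subseteq> A - B"
    then have "(E1 \<union> E2) \<inter> B = E1" "(E1 \<union> E2) \<inter> (A - B) = E2" by auto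
    then show "f (E1 \<union> E2) * g (E1 \<union> E2) = f E1 * g E2" by (metis assms(3,4))
  qed
  also have "\<dots> = rand_expect p B f * rand_expect p (A - B) g"
    by (simp only: rand_expect_cmult rand_expect_multc)
  also have "\<dots> = rand_expect p A f * rand_expect p A g"
    using assms by (simp add: rand_expect_restrict[of A B f] rand_expect_restrict[of A "A - B" g])
  finally show ?thesis .
qed

lemma rand_expect_prod_indep:
  assumes "finite A" "finite J" "\<And>j. j \<in> J \<Longrightarrow> B j \<subseteq> A" "disjoint_family_on B J"
    "\<And>j E. j \<in> J \<Longrightarrow> f j E = f j (E \<inter> B j)"
  shows "rand_expect p A (\<lambda>E. \<Prod>j\<in>J. f j E) = (\<Prod>j\<in>J. rand_expect p A (f j))"
  using assms(2-)
proof (induction J rule: finite_induct)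
  case empty
  then show ?case using assms(1) by (simp add: rand_expect_const)
next
  case (insert j J)
  note dep = insert.prems(3)
  have rest: "(\<Prod>i\<in>J. f i E) = (\<Prod>i\<in>J. f i (E \<inter> (A - B j)))" for E
  proof (rule prod.cong[OF refl])
    fix i assume i: "i \<in> J"
    with insert.hyps(2) have "i \<noteq> j" by blast
    with i have "B i \<inter> B j = {}"
      by (intro disjoint_family_onD[OF insert.prems(2)]) simp_all
    moreover have "B i \<subseteq> A" using i by (intro insert.prems(1)) simp
    ultimately have "E \<inter> B i = E \<inter> (A - B j) \<inter> B i" by blast
    have "f i E = f i (E \<inter> B i)" using i by (rule dep[OF insertI2])
    also have "\<dots> = f i (E \<inter> (A - B j) \<inter> B i)" by (simp only: \<open>E \<inter> B i = _\<close>)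
    also have "\<dots> = f i (E \<inter> (A - B j))" using i by (rule dep[OF insertI2, symmetric])
    finally show "f i E = f i (E \<inter> (A - B j))" .
  qed
  have "rand_expect p A (\<lambda>E. f j E * (\<Prod>i\<in>J. f i E))
      = rand_expect p A (f j) * rand_expect p A (\<lambda>E. \<Prod>i\<in>J. f i E)"
  proof (rule rand_expect_mult_indep[OF assms(1), of "B j"])
    show "B j \<subseteq> A" using insert.prems(1) by blast
    show "f j E = f j (E \<inter> B j)" for E by (rule dep) simp
  qed (rule rest)
  moreover have "rand_expect p A (\<lambda>E. \<Prod>i\<in>J. f i E) = (\<Prod>i\<in>J. rand_expect p A (f i))"
  proof (rule insert.IH)
    show "B i \<subseteq> A" if "i \<in> J" for i using insert.prems(1) that by blast
    show "disjoint_family_on B J" using insert.prems(2) by (rule disjoint_family_on_mono[rotated]) auto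
    show "f i E = f i (E \<inter> B i)" if "i \<in> J" for i E using that by (rule dep[OF insertI2])
  qed
  ultimately show ?case using insert.hyps by simp
qed

lemma rand_expect_subset_indicator:
  assumes "finite A" "B \<subseteq> A"
  shows "rand_expect p A (\<lambda>E. if B \<subseteq> E then 1 else 0) = p ^ card B"
proof -
  have "rand_expect p A (\<lambda>E. if B \<subseteq> E then 1 else 0)
      = rand_expect p B (\<lambda>E. if B \<subseteq> E then 1 else 0)"
    by (rule rand_expect_restrict) (use assms in auto)
  also have "\<dots> = (\<Sum>E\<in>Pow B. if E = B then p ^ card E * (1 - p) ^ (card B - card E) else 0)"
    unfolding rand_expect_def by (rule sum.cong) auto
  also have "\<dots> = p ^ card B" using finite_subset[OF assms(2,1)] by simp
  finally show ?thesis .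
qed

lemma exp_le_one_plus_sq:
  fixes x :: real
  assumes "\<bar>x\<bar> \<le> 1"
  shows "exp x \<le> 1 + x + x\<^sup>2"
proof (cases "0 \<le> x")
  case True
  then show ?thesis using assms exp_bound by simp
next
  case False
  have "(1 + x + x\<^sup>2) * (1 - x) = 1 - x ^ 3"
    by (simp add: algebra_simps power2_eq_square power3_eq_cube)
  moreover have "x ^ 3 \<le> 0" using False by (simp add: power_le_zero_eq)
  ultimately have "1 \<le> (1 + x + x\<^sup>2) * (1 - x)" by simp
  then have "1 / (1 - x) \<le> 1 + x + x\<^sup>2"
    using False by (simp add: divide_le_eq)
  moreover have "exp x \<le> 1 / (1 - x)"
    using False exp_ge_add_one_self[of "- x"] by (simp add: exp_minus field_simps)
  ultimately show ?thesis by linarith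
qed

lemma rand_expect_exp_count:
  fixes B :: "'i \<Rightarrow> 'a set"
  assumes "finite A" "finite X" "\<And>x. x \<in> X \<Longrightarrow> B x \<subseteq> A"
    and "\<And>x. x \<in> X \<Longrightarrow> card (B x) = k" "disjoint_family_on B X"
  shows "rand_expect p A (\<lambda>E. exp (l * real (card {x \<in> X. B x \<subseteq> E})))
    = (1 + p ^ k * (exp l - 1)) ^ card X"
proof -
  let ?ind = "\<lambda>x E. if B x \<subseteq> E then 1 else 0 :: real"
  have "exp (l * real (card {x \<in> X. B x \<subseteq> E})) = (\<Prod>x\<in>X. exp (l * ?ind x E))" for E
  proof -
    have "real (card {x \<in> X. B x \<subseteq> E}) = (\<Sum>x\<in>X. ?ind x E)"
      using assms(2) by (simp add: sum.If_cases Int_def conj_commute)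
    then show ?thesis using assms(2) by (simp add: sum_distrib_left exp_sum)
  qed
  then have "rand_expect p A (\<lambda>E. exp (l * real (card {x \<in> X. B x \<subseteq> E})))
      = (\<Prod>x\<in>X. rand_expect p A (\<lambda>E. exp (l * ?ind x E)))"
    by (simp add: rand_expect_prod_indep[OF assms(1,2,3,5)])
  also have "\<dots> = (\<Prod>x\<in>X. 1 + p ^ k * (exp l - 1))"
  proof (rule prod.cong[OF refl])
    fix x assume x: "x \<in> X"
    have "rand_expect p A (\<lambda>E. exp (l * ?ind x E)) = rand_expect p A (\<lambda>E. 1 + (exp l - 1) * ?ind x E)"
      by (rule rand_expect_cong) simp
    also have "\<dots> = 1 + (exp l - 1) * p ^ card (B x)"
      using assms(1,3) x
      by (simp add: rand_expect_add rand_expect_const rand_expect_cmult rand_expect_subset_indicator)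
    finally show "rand_expect p A (\<lambda>E. exp (l * ?ind x E)) = 1 + p ^ k * (exp l - 1)"
      using assms(4) x by simp
  qed
  finally show ?thesis by simp
qed

lemma rand_expect_exp_count_deviation:
  fixes B :: "'i \<Rightarrow> 'a set"
  assumes "finite A" "finite X" "\<And>x. x \<in> X \<Longrightarrow> B x \<subseteq> A"
    and "\<And>x. x \<in> X \<Longrightarrow> card (B x) = k" "disjoint_family_on B X"
    and "0 \<le> p" "p \<le> 1" "\<bar>l\<bar> \<le> 1"
  defines "\<mu> \<equiv> p ^ k * real (card X)"
  shows "rand_expect p A (\<lambda>E. exp (l * (real (card {x \<in> X. B x \<subseteq> E}) - (1 + 2 * l) * \<mu>)))
    \<le> exp (- l\<^sup>2 * \<mu>)"
proof -
  let ?q = "p ^ k"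
  have q: "0 \<le> ?q" "?q \<le> 1" using assms(6,7) by (simp_all add: power_le_one)
  have "rand_expect p A (\<lambda>E. exp (l * (real (card {x \<in> X. B x \<subseteq> E}) - (1 + 2 * l) * \<mu>)))
      = rand_expect p A (\<lambda>E. exp (l * real (card {x \<in> X. B x \<subseteq> E}))) * exp (- l * (1 + 2 * l) * \<mu>)"
  proof -
    have "exp (l * (c - (1 + 2 * l) * \<mu>)) = exp (l * c) * exp (- l * (1 + 2 * l) * \<mu>)" for c
      by (simp add: mult_exp_exp algebra_simps)
    then show ?thesis by (simp add: rand_expect_multc)
  qed
  also have "\<dots> = (1 + ?q * (exp l - 1)) ^ card X * exp (- l * (1 + 2 * l) * \<mu>)"
    by (simp add: rand_expect_exp_count[OF assms(1-5)])
  also have "\<dots> \<le> exp (?q * (exp l - 1)) ^ card X * exp (- l * (1 + 2 * l) * \<mu>)"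
  proof (intro mult_right_mono power_mono)
    have "0 \<le> 1 - ?q + ?q * exp l" using q by simp
    then show "0 \<le> 1 + ?q * (exp l - 1)" by (simp add: algebra_simps)
  qed (simp_all add: add.commute)
  also have "\<dots> = exp (\<mu> * (exp l - 1 - l * (1 + 2 * l)))"
    by (simp add: \<mu>_def flip: exp_of_nat_mult exp_add) (simp add: algebra_simps)
  also have "\<dots> \<le> exp (\<mu> * (l + l\<^sup>2 - l * (1 + 2 * l)))"
  proof -
    have "0 \<le> \<mu>" using q by (simp add: \<mu>_def)
    with exp_le_one_plus_sq[OF assms(8)] show ?thesis by (simp add: mult_left_mono)
  qed
  also have "\<dots> = exp (- l\<^sup>2 * \<mu>)"
    by (simp add: algebra_simps power2_eq_square)
  finally show ?thesis .
qed

section \<open>Codegrees in the random graph\<close>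

definition star_edges :: "nat \<Rightarrow> nat set \<Rightarrow> nat set set" where
  "star_edges x S = (\<lambda>s. {s, x}) ` S"

lemma finite_all_edges: "finite (all_edges n)"
  unfolding all_edges_def by (rule finite_subset[of _ "Pow {..<n}"]) auto

lemma gnp_prob_eq_rand_expect:
  "gnp_prob n p P = rand_expect p (all_edges n) (\<lambda>E. if P E then 1 else 0)"
  unfolding gnp_prob_def rand_expect_def by (rule sum.cong) auto

lemma gnp_prob_le_1: "0 \<le> p \<Longrightarrow> p \<le> 1 \<Longrightarrow> gnp_prob n p P \<le> 1"
  using rand_expect_mono[of p "all_edges n" "\<lambda>E. if P E then 1 else 0" "\<lambda>_. 1"]
  by (simp add: gnp_prob_eq_rand_expect rand_expect_const finite_all_edges)

lemma codeg_eq_card_star_edges: "codeg E S X = card {x \<in> X. star_edges x S \<subseteq> E}"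
  unfolding codeg_def star_edges_def by (simp add: image_subset_iff)

lemma codeg_Int_star_edges: "codeg E S X = codeg (E \<inter> (\<Union>x\<in>X. star_edges x S)) S X"
  unfolding codeg_def star_edges_def by (rule arg_cong[where f = card]) blast

lemma star_edges_subset_all_edges:
  "x < n \<Longrightarrow> S \<subseteq> {..<n} \<Longrightarrow> x \<notin> S \<Longrightarrow> star_edges x S \<subseteq> all_edges n"
  unfolding star_edges_def all_edges_def by (auto simp: card_insert_if)

lemma card_star_edges: "x \<notin> S \<Longrightarrow> card (star_edges x S) = card S"
  unfolding star_edges_def by (rule card_image) (auto simp: inj_on_def doubleton_eq_iff)

lemma star_edges_disjoint:
  "x \<notin> S' \<Longrightarrow> x' \<notin> S \<Longrightarrow> x \<noteq> x' \<or> S \<inter> S' = {} \<Longrightarrow>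
    star_edges x S \<inter> star_edges x' S' = {}"
  unfolding star_edges_def by (auto simp: doubleton_eq_iff)

lemma codeg_deviation_expectation:
  assumes "X \<subseteq> {..<n}" "S \<subseteq> {..<n} - X" "card S = k" "0 \<le> p" "p \<le> 1" "\<bar>l\<bar> \<le> 1"
  defines "\<mu> \<equiv> p ^ k * real (card X)"
  shows "rand_expect p (all_edges n) (\<lambda>E. exp (l * (real (codeg E S X) - (1 + 2 * l) * \<mu>)))
    \<le> exp (- l\<^sup>2 * \<mu>)"
  unfolding codeg_eq_card_star_edges \<mu>_def
proof (rule rand_expect_exp_count_deviation)
  show "finite (all_edges n)" by (rule finite_all_edges)
  show "finite X" using assms(1) finite_subset by blast
  show "star_edges x S \<subseteq> all_edges n" if "x \<in> X" for x
    using that assms(1,2) by (intro star_edges_subset_all_edges) auto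
  show "card (star_edges x S) = k" if "x \<in> X" for x
    using that assms(2,3) by (subst card_star_edges) auto
  show "disjoint_family_on (\<lambda>x. star_edges x S) X"
    unfolding disjoint_family_on_def
  proof (intro ballI impI)
    fix x x' assume "x \<in> X" "x' \<in> X" "x \<noteq> x'"
    then show "star_edges x S \<inter> star_edges x' S = {}"
      using assms(2) by (intro star_edges_disjoint) auto
  qed
qed (use assms in auto)

definition deviation_weight :: "real \<Rightarrow> real \<Rightarrow> real \<Rightarrow> real" where
  "deviation_weight \<alpha> \<mu> c =
     exp (\<alpha> / 2 * (c - (1 + \<alpha>) * \<mu>)) + exp (- \<alpha> / 2 * (c - (1 - \<alpha>) * \<mu>))"

lemma deviation_weight_pos: "0 < deviation_weight \<alpha> \<mu> c"
  unfolding deviation_weight_def by (intro add_pos_pos) auto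

lemma one_le_deviation_weight:
  assumes "0 < \<alpha>" "\<not> ((1 - \<alpha>) * \<mu> \<le> c \<and> c \<le> (1 + \<alpha>) * \<mu>)"
  shows "1 \<le> deviation_weight \<alpha> \<mu> c"
proof -
  have exp_pos: "0 < exp (\<alpha> / 2 * (c - (1 + \<alpha>) * \<mu>))" "0 < exp (- \<alpha> / 2 * (c - (1 - \<alpha>) * \<mu>))"
    by simp_all
  consider "(1 + \<alpha>) * \<mu> < c" | "c < (1 - \<alpha>) * \<mu>" using assms(2) by linarith
  then show ?thesis
  proof cases
    case 1
    then have "1 \<le> exp (\<alpha> / 2 * (c - (1 + \<alpha>) * \<mu>))" using assms(1) by (simp add: zero_le_mult_iff)
    then show ?thesis unfolding deviation_weight_def using exp_pos by linarith
  next
    case 2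
    then have "1 \<le> exp (- \<alpha> / 2 * (c - (1 - \<alpha>) * \<mu>))" using assms(1) by (simp add: mult_le_0_iff)
    then show ?thesis unfolding deviation_weight_def using exp_pos by linarith
  qed
qed

lemma codeg_deviation_weight_expectation:
  assumes "X \<subseteq> {..<n}" "S \<subseteq> {..<n} - X" "card S = k" "0 \<le> p" "p \<le> 1" "0 < \<alpha>" "\<alpha> \<le> 1"
  defines "\<mu> \<equiv> p ^ k * real (card X)"
  shows "rand_expect p (all_edges n) (\<lambda>E. deviation_weight \<alpha> \<mu> (codeg E S X))
    \<le> 2 * exp (- \<alpha>\<^sup>2 / 4 * \<mu>)"
proof -
  have "\<bar>\<alpha> / 2\<bar> \<le> 1" "\<bar>- \<alpha> / 2\<bar> \<le> 1" using assms(6,7) by auto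
  from this[THEN codeg_deviation_expectation[OF assms(1-5)]]
  have "rand_expect p (all_edges n) (\<lambda>E. exp (\<alpha> / 2 * (real (codeg E S X) - (1 + \<alpha>) * \<mu>)))
      \<le> exp (- \<alpha>\<^sup>2 / 4 * \<mu>)"
    "rand_expect p (all_edges n) (\<lambda>E. exp (- \<alpha> / 2 * (real (codeg E S X) - (1 - \<alpha>) * \<mu>)))
      \<le> exp (- \<alpha>\<^sup>2 / 4 * \<mu>)"
    by (simp_all add: \<mu>_def power_divide)
  then show ?thesis unfolding deviation_weight_def rand_expect_add by simp
qed

section \<open>The union bound\<close>

lemma bad_sets_blocked_or_disjoint_family:
  fixes U :: "'a set" and bad :: "'a set \<Rightarrow> bool"
  assumes "finite U" "k \<ge> 1"
  obtains Y where "Y \<subseteq> U" "card Y \<le> k * (t - 1)"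
      "\<And>S. S \<subseteq> U - Y \<Longrightarrow> card S = k \<Longrightarrow> \<not> bad S"
    | F where "F \<subseteq> {S. S \<subseteq> U \<and> card S = k \<and> bad S}" "card F = t" "pairwise disjnt F"
proof -
  define G where
    "G = {F. F \<subseteq> {S. S \<subseteq> U \<and> card S = k \<and> bad S} \<and> pairwise disjnt F \<and> card F \<le> t}"
  have "finite G" unfolding G_def by (rule finite_subset[of _ "Pow (Pow U)"]) (use assms(1) in auto)
  moreover have "{} \<in> G" unfolding G_def by auto
  ultimately have "Max (card ` G) \<in> card ` G" by (intro Max_in) auto
  then obtain F where "F \<in> G" "card F = Max (card ` G)" by auto
  with \<open>finite G\<close> have F_max: "\<And>F'. F' \<in> G \<Longrightarrow> card F' \<le> card F" by simp
  from \<open>F \<in> G\<close> have F_bad: "F \<subseteq> {S. S \<subseteq> U \<and> card S = k \<and> bad S}" and F_disj: "pairwise disjnt F"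
    and "card F \<le> t"
    unfolding G_def by auto
  have "finite F" using F_bad assms(1) by (auto intro: finite_subset[of _ "Pow U"])
  show thesis
  proof (cases "card F = t")
    case True
    with F_bad F_disj show thesis by (intro that(2)) auto
  next
    case False
    with \<open>card F \<le> t\<close> have "card F < t" by simp
    show thesis
    proof (rule that(1))
      show "\<Union>F \<subseteq> U" using F_bad by auto
      have "card (\<Union>F) \<le> (\<Sum>S\<in>F. card S)" by (rule card_Union_le_sum_card)
      also have "\<dots> = k * card F" using F_bad by (simp add: subset_iff)
      also have "\<dots> \<le> k * (t - 1)" using \<open>card F < t\<close> by (intro mult_left_mono) auto
      finally show "card (\<Union>F) \<le> k * (t - 1)" .
      fix S assume S: "S \<subseteq> U - \<Union>F" "card S = k"
      show "\<not> bad S"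
      proof
        assume "bad S"
        have "S \<noteq> {}" using S(2) assms(2) by auto
        with S(1) have "S \<notin> F" by blast
        have "insert S F \<in> G"
          unfolding G_def using S \<open>bad S\<close> F_bad F_disj \<open>card F < t\<close> \<open>S \<notin> F\<close> \<open>finite F\<close>
          by (auto simp: pairwise_insert disjnt_def)
        then have "card (insert S F) \<le> card F" by (rule F_max)
        with \<open>S \<notin> F\<close> \<open>finite F\<close> show False by simp
      qed
    qed
  qed
qed

definition large_vertex_sets :: "nat \<Rightarrow> real \<Rightarrow> nat set set" where
  "large_vertex_sets n \<beta> = {X. X \<subseteq> {..<n} \<and> \<beta> * real n \<le> real (card X)}"

definition disjoint_ksets :: "nat \<Rightarrow> nat \<Rightarrow> nat \<Rightarrow> nat set \<Rightarrow> nat set set set" where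
  "disjoint_ksets n k t X =
     {F. F \<subseteq> {S. S \<subseteq> {..<n} - X \<and> card S = k} \<and> card F = t \<and> pairwise disjnt F}"

lemma card_large_vertex_sets: "card (large_vertex_sets n \<beta>) \<le> 2 ^ n"
proof -
  have "card (large_vertex_sets n \<beta>) \<le> card (Pow {..<n})"
    unfolding large_vertex_sets_def by (rule card_mono) auto
  then show ?thesis by (simp add: card_Pow)
qed

lemma binomial_le_power: "n choose r \<le> n ^ r"
  by (cases "r \<le> n") (auto simp: binomial_le_pow binomial_eq_0)

lemma card_disjoint_ksets: "card (disjoint_ksets n k t X) \<le> n ^ (k * t)"
proof -
  define KS where "KS = {S. S \<subseteq> {..<n} \<and> card S = k}"
  have "card (disjoint_ksets n k t X) \<le> card {F. F \<subseteq> KS \<and> card F = t}"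
    unfolding disjoint_ksets_def KS_def
    by (rule card_mono) (auto intro: finite_subset[of _ "Pow (Pow {..<n})"])
  also have "\<dots> = (n choose k) choose t"
    using n_subsets[of KS t] n_subsets[of "{..<n}" k] by (simp add: KS_def)
  also have "\<dots> \<le> (n choose k) ^ t" by (rule binomial_le_power)
  also have "\<dots> \<le> (n ^ k) ^ t" by (intro power_mono binomial_le_power) auto
  finally show ?thesis by (simp add: power_mult)
qed

lemma failure_gives_disjoint_deviating_ksets:
  assumes "\<not> lemma4p4_property n k \<alpha> \<beta> K p E" "k \<ge> 1" "real (k * (t - 1)) \<le> K / p ^ k"
  obtains X F where "X \<in> large_vertex_sets n \<beta>" "F \<in> disjoint_ksets n k t X"
    "\<And>S. S \<in> F \<Longrightarrow> \<not> ((1 - \<alpha>) * p ^ k * real (card X) \<le> real (codeg E S X) \<and>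
                         real (codeg E S X) \<le> (1 + \<alpha>) * p ^ k * real (card X))"
proof -
  let ?good = "\<lambda>X S. (1 - \<alpha>) * p ^ k * real (card X) \<le> real (codeg E S X) \<and>
                       real (codeg E S X) \<le> (1 + \<alpha>) * p ^ k * real (card X)"
  obtain X where X: "X \<subseteq> {..<n}" "\<beta> * real n \<le> real (card X)"
    and no_Y: "\<not> (\<exists>Y. Y \<subseteq> {..<n} - X \<and> real (card Y) \<le> K / p ^ k \<and>
                 (\<forall>S. S \<subseteq> {..<n} - (X \<union> Y) \<and> card S = k \<longrightarrow> ?good X S))"
    using assms(1) unfolding lemma4p4_property_def by blast
  show thesis
  proof (rule bad_sets_blocked_or_disjoint_family[where U = "{..<n} - X" and bad = "\<lambda>S. \<not> ?good X S"])
    fix Y assume Y: "Y \<subseteq> {..<n} - X" "card Y \<le> k * (t - 1)"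
      and good: "\<And>S. S \<subseteq> {..<n} - X - Y \<Longrightarrow> card S = k \<Longrightarrow> \<not> \<not> ?good X S"
    have "real (card Y) \<le> K / p ^ k" using Y(2) assms(3) by (meson of_nat_le_iff order_trans)
    moreover have "{..<n} - (X \<union> Y) = {..<n} - X - Y" by blast
    then have "\<forall>S. S \<subseteq> {..<n} - (X \<union> Y) \<and> card S = k \<longrightarrow> ?good X S"
      using good by auto
    ultimately show thesis using no_Y Y(1) by blast
  next
    fix F assume "F \<subseteq> {S. S \<subseteq> {..<n} - X \<and> card S = k \<and> \<not> ?good X S}"
      and "card F = t" "pairwise disjnt F"
    moreover have "X \<in> large_vertex_sets n \<beta>" using X by (simp add: large_vertex_sets_def)
    ultimately show thesis by (intro that[of X F]) (auto simp: disjoint_ksets_def)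
  qed (use assms(2) in auto)
qed

lemma disjoint_ksets_weight_expectation:
  assumes "X \<subseteq> {..<n}" "F \<in> disjoint_ksets n k t X" "0 \<le> p" "p \<le> 1" "0 < \<alpha>" "\<alpha> \<le> 1"
  defines "\<mu> \<equiv> p ^ k * real (card X)"
  shows "rand_expect p (all_edges n) (\<lambda>E. \<Prod>S\<in>F. deviation_weight \<alpha> \<mu> (codeg E S X))
    \<le> (2 * exp (- \<alpha>\<^sup>2 / 4 * \<mu>)) ^ t"
proof -
  have F: "\<And>S. S \<in> F \<Longrightarrow> S \<subseteq> {..<n} - X \<and> card S = k" "pairwise disjnt F" "card F = t"
    using assms(2) by (auto simp: disjoint_ksets_def)
  have "finite F" using F(1) by (intro finite_subset[of F "Pow {..<n}"]) auto
  let ?B = "\<lambda>S. \<Union>x\<in>X. star_edges x S"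
  have "rand_expect p (all_edges n) (\<lambda>E. \<Prod>S\<in>F. deviation_weight \<alpha> \<mu> (codeg E S X))
      = (\<Prod>S\<in>F. rand_expect p (all_edges n) (\<lambda>E. deviation_weight \<alpha> \<mu> (codeg E S X)))"
  proof (rule rand_expect_prod_indep[OF finite_all_edges \<open>finite F\<close>, where B = ?B])
    show "?B S \<subseteq> all_edges n" if "S \<in> F" for S
    proof (rule UN_least)
      fix x assume "x \<in> X"
      then show "star_edges x S \<subseteq> all_edges n"
        using F(1)[OF that] assms(1) by (intro star_edges_subset_all_edges) auto
    qed
    show "disjoint_family_on ?B F"
      unfolding disjoint_family_on_def
    proof (intro ballI impI)
      fix S S' assume "S \<in> F" "S' \<in> F" "S \<noteq> S'"
      then have "S \<inter> S' = {}" "S \<inter> X = {}" "S' \<inter> X = {}"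
        using F(1,2) by (auto simp: pairwise_def disjnt_def)
      then show "?B S \<inter> ?B S' = {}" using star_edges_disjoint by blast
    qed
    show "deviation_weight \<alpha> \<mu> (codeg E S X) = deviation_weight \<alpha> \<mu> (codeg (E \<inter> ?B S) S X)"
      for S E
      using codeg_Int_star_edges[of E S X] by simp
  qed
  also have "\<dots> \<le> (\<Prod>S\<in>F. 2 * exp (- \<alpha>\<^sup>2 / 4 * \<mu>))"
  proof (rule prod_mono)
    fix S assume S: "S \<in> F"
    let ?e = "rand_expect p (all_edges n) (\<lambda>E. deviation_weight \<alpha> \<mu> (codeg E S X))"
    have "0 \<le> ?e"
      using assms(3,4) by (intro rand_expect_nonneg less_imp_le[OF deviation_weight_pos])
    moreover have "?e \<le> 2 * exp (- \<alpha>\<^sup>2 / 4 * \<mu>)"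
      unfolding \<mu>_def using F(1)[OF S] assms(1,3-6) by (intro codeg_deviation_weight_expectation) auto
    ultimately show "0 \<le> ?e \<and> ?e \<le> 2 * exp (- \<alpha>\<^sup>2 / 4 * \<mu>)" ..
  qed
  finally show ?thesis using F(3) by simp
qed

lemma failure_indicator_le_weights:
  assumes "k \<ge> 1" "0 < \<alpha>" "real (k * (t - 1)) \<le> K / p ^ k"
  shows "(if lemma4p4_property n k \<alpha> \<beta> K p E then 0 else 1)
    \<le> (\<Sum>X\<in>large_vertex_sets n \<beta>. \<Sum>F\<in>disjoint_ksets n k t X.
         \<Prod>S\<in>F. deviation_weight \<alpha> (p ^ k * real (card X)) (codeg E S X))"
    (is "_ \<le> (\<Sum>X\<in>?Xs. \<Sum>F\<in>?Fs X. ?w X F)")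
proof -
  have w_nonneg: "0 \<le> ?w X F" for X F
    by (simp add: prod_nonneg less_imp_le[OF deviation_weight_pos])
  have fin: "finite ?Xs" "finite (?Fs X)" for X
    unfolding large_vertex_sets_def disjoint_ksets_def
    by (auto intro: finite_subset[of _ "Pow {..<n}"] finite_subset[of _ "Pow (Pow {..<n})"])
  show ?thesis
  proof (cases "lemma4p4_property n k \<alpha> \<beta> K p E")
    case True
    then show ?thesis using w_nonneg by (simp add: sum_nonneg)
  next
    case False
    then obtain X F where XF: "X \<in> ?Xs" "F \<in> ?Fs X"
      and dev: "\<And>S. S \<in> F \<Longrightarrow> \<not> ((1 - \<alpha>) * p ^ k * real (card X) \<le> real (codeg E S X) \<and>
                         real (codeg E S X) \<le> (1 + \<alpha>) * p ^ k * real (card X))"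
      using failure_gives_disjoint_deviating_ksets[OF _ assms(1,3)] by metis
    have "1 \<le> ?w X F"
      using dev assms(2) by (intro prod_ge_1) (auto intro!: one_le_deviation_weight simp: mult.assoc)
    also have "\<dots> \<le> (\<Sum>F\<in>?Fs X. ?w X F)"
      using XF(2) fin w_nonneg by (intro member_le_sum) auto
    also have "\<dots> \<le> (\<Sum>X\<in>?Xs. \<Sum>F\<in>?Fs X. ?w X F)"
      using XF(1) fin w_nonneg by (intro member_le_sum sum_nonneg) auto
    finally show ?thesis using False by simp
  qed
qed

lemma lemma4p4_property_failure_bound:
  assumes "k \<ge> 1" "0 < \<alpha>" "\<alpha> \<le> 1" "0 < p" "p \<le> 1" "real (k * (t - 1)) \<le> K / p ^ k"
  shows "1 - gnp_prob n p (lemma4p4_property n k \<alpha> \<beta> K p)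
    \<le> 2 ^ n * (real n ^ (k * t) * (2 * exp (- \<alpha>\<^sup>2 / 4 * (p ^ k * (\<beta> * real n)))) ^ t)"
proof -
  let ?P = "lemma4p4_property n k \<alpha> \<beta> K p"
  let ?Xs = "large_vertex_sets n \<beta>" and ?Fs = "disjoint_ksets n k t"
  let ?w = "\<lambda>X F E. \<Prod>S\<in>F. deviation_weight \<alpha> (p ^ k * real (card X)) (codeg E S X)"
  let ?c = "2 * exp (- \<alpha>\<^sup>2 / 4 * (p ^ k * (\<beta> * real n)))"
  have "rand_expect p (all_edges n) (\<lambda>E. if ?P E then 0 else 1)
      = rand_expect p (all_edges n) (\<lambda>E. 1 - (if ?P E then 1 else 0))"
    by (rule rand_expect_cong) simp
  then have "1 - gnp_prob n p ?P = rand_expect p (all_edges n) (\<lambda>E. if ?P E then 0 else 1)"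
    by (simp add: rand_expect_diff rand_expect_const finite_all_edges gnp_prob_eq_rand_expect)
  also have "\<dots> \<le> rand_expect p (all_edges n) (\<lambda>E. \<Sum>X\<in>?Xs. \<Sum>F\<in>?Fs X. ?w X F E)"
    using assms by (intro rand_expect_mono failure_indicator_le_weights) auto
  also have "\<dots> = (\<Sum>X\<in>?Xs. \<Sum>F\<in>?Fs X. rand_expect p (all_edges n) (?w X F))"
    by (simp only: rand_expect_sum)
  also have "\<dots> \<le> (\<Sum>X\<in>?Xs. \<Sum>F\<in>?Fs X. ?c ^ t)"
  proof (intro sum_mono)
    fix X F assume X: "X \<in> ?Xs" and F: "F \<in> ?Fs X"
    then have "rand_expect p (all_edges n) (?w X F)
        \<le> (2 * exp (- \<alpha>\<^sup>2 / 4 * (p ^ k * real (card X)))) ^ t"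
      using assms(2-5) by (intro disjoint_ksets_weight_expectation) (auto simp: large_vertex_sets_def)
    also have "\<dots> \<le> ?c ^ t"
      using X assms(4) by (intro power_mono) (auto simp: large_vertex_sets_def mult_left_mono)
    finally show "rand_expect p (all_edges n) (?w X F) \<le> ?c ^ t" .
  qed
  also have "\<dots> \<le> (\<Sum>X\<in>?Xs. real n ^ (k * t) * ?c ^ t)"
  proof (intro sum_mono)
    fix X
    have "real (card (?Fs X)) \<le> real n ^ (k * t)"
      using card_disjoint_ksets[of n k t X] by (simp flip: of_nat_power)
    then show "(\<Sum>F\<in>?Fs X. ?c ^ t) \<le> real n ^ (k * t) * ?c ^ t"
      by (simp add: mult_right_mono)
  qed
  also have "\<dots> = real (card ?Xs) * (real n ^ (k * t) * ?c ^ t)"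
    by simp
  also have "\<dots> \<le> 2 ^ n * (real n ^ (k * t) * ?c ^ t)"
  proof (rule mult_right_mono)
    show "real (card ?Xs) \<le> 2 ^ n"
      using card_large_vertex_sets[of n \<beta>] by (simp flip: of_nat_power)
  qed simp
  finally show ?thesis .
qed

section \<open>Choice of the family size and asymptotics\<close>

lemma failure_exponent_bound:
  fixes N L q t :: real
  assumes "k \<ge> 1" "0 < \<alpha>" "0 < \<beta>" "K = 12 * real k / (\<alpha>\<^sup>2 * \<beta>)"
    and "0 < q" "K * L \<le> q * N" "1 \<le> L"
    and "K / (real k * q) < t" "t \<le> K / (real k * q) + 1"
  shows "N * ln 2 + t * (real k * L + ln 2 - \<alpha>\<^sup>2 / 4 * (q * (\<beta> * N)))
    \<le> - (2 - 2 * ln 2) * N + real k * L + ln 2"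
proof -
  have "0 < K" using assms(1-4) by simp
  with assms(7) have "0 < K * L" by simp
  with assms(6) have "0 < q * N" by linarith
  with assms(5) have "0 \<le> N" by (simp add: zero_less_mult_iff)
  have "K / (real k * q) * q = 12 / (\<alpha>\<^sup>2 * \<beta>)"
    using assms(1,4,5) by (simp add: field_simps)
  then have "12 / (\<alpha>\<^sup>2 * \<beta>) \<le> t * q"
    using assms(5,8) by (metis less_eq_real_def mult_right_mono)
  then have "12 / (\<alpha>\<^sup>2 * \<beta>) * (\<alpha>\<^sup>2 * \<beta> * N / 4) \<le> t * q * (\<alpha>\<^sup>2 * \<beta> * N / 4)"
    using \<open>0 \<le> N\<close> assms(2,3) by (intro mult_right_mono) auto
  then have deviation: "3 * N \<le> t * (\<alpha>\<^sup>2 / 4 * (q * (\<beta> * N)))"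
    using assms(2,3) by (simp add: field_simps)
  have "K * L / q \<le> N" using assms(5,6) by (simp add: field_simps)
  have "t * (real k * L) \<le> (K / (real k * q) + 1) * (real k * L)"
    using assms(1,7,9) by (intro mult_right_mono) auto
  also have "\<dots> = K * L / q + real k * L" using assms(1) by (simp add: field_simps)
  finally have ksets: "t * (real k * L) \<le> N + real k * L" using \<open>K * L / q \<le> N\<close> by linarith
  have "K / (real k * q) \<le> K / q"
    using assms(1,5) \<open>0 < K\<close> by (intro divide_left_mono) auto
  also have "\<dots> \<le> K * L / q"
    using assms(5,7) \<open>0 < K\<close> by (intro divide_right_mono) auto
  finally have "t * ln 2 \<le> (N + 1) * ln 2"
    using assms(9) \<open>K * L / q \<le> N\<close> by (intro mult_right_mono) auto
  with deviation ksets show ?thesis by (simp add: algebra_simps)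
qed

lemma failure_bound_eq_exp:
  fixes x y :: real
  assumes "0 < x"
  shows "2 ^ n * (x ^ (k * t) * (2 * exp y) ^ t)
    = exp (real n * ln 2 + real t * (real k * ln x + ln 2 + y))"
proof -
  have "2 ^ n = exp (real n * ln 2)" by (simp add: exp_of_nat_mult)
  moreover have "x ^ (k * t) = exp (real t * (real k * ln x))"
    using assms by (simp add: exp_of_nat_mult power_mult)
  moreover have "(2 * exp y) ^ t = exp (real t * (ln 2 + y))"
    by (simp add: exp_of_nat_mult exp_add)
  ultimately show ?thesis by (simp add: algebra_simps flip: exp_add)
qed

lemma gnp_prob_lemma4p4_property_lower_bound:
  assumes "k \<ge> 1" "0 < \<alpha>" "\<alpha> < 1" "0 < \<beta>" "K = 12 * real k / (\<alpha>\<^sup>2 * \<beta>)"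
    and "1 \<le> ln (real n)" "p \<le> 1" "(K * ln (real n) / real n) powr (1 / real k) \<le> p"
  shows "1 - exp (- (2 - 2 * ln 2) * real n + real k * ln (real n) + ln 2)
    \<le> gnp_prob n p (lemma4p4_property n k \<alpha> \<beta> K p)"
proof -
  define x where "x = K * ln (real n) / real n"
  have "0 < real n" using assms(6) by (cases "n = 0") auto
  have "0 < K" using assms(1,2,4,5) by simp
  moreover have "0 < ln (real n)" using assms(6) by linarith
  ultimately have "0 < x" unfolding x_def using \<open>0 < real n\<close> by simp
  then have "0 < x powr (1 / real k)" by simp
  with assms(8) have "0 < p" unfolding x_def by linarith
  have "x = (x powr (1 / real k)) ^ k"
    using \<open>0 < x\<close> assms(1) by (simp add: powr_power)
  also have "\<dots> \<le> p ^ k" using assms(8) unfolding x_def by (intro power_mono) auto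
  finally have "K * ln (real n) \<le> p ^ k * real n"
    unfolding x_def using \<open>0 < real n\<close> by (simp add: field_simps)
  define t where "t = nat \<lfloor>K / (real k * p ^ k)\<rfloor> + 1"
  have "0 \<le> K / (real k * p ^ k)" using \<open>0 < K\<close> \<open>0 < p\<close> by simp
  then have t: "K / (real k * p ^ k) < real t" "real t \<le> K / (real k * p ^ k) + 1"
    "real (t - 1) \<le> K / (real k * p ^ k)"
    unfolding t_def by linarith+
  have "real (k * (t - 1)) \<le> K / p ^ k"
    using mult_left_mono[OF t(3), of "real k"] assms(1) by simp
  then have "1 - gnp_prob n p (lemma4p4_property n k \<alpha> \<beta> K p)
      \<le> 2 ^ n * (real n ^ (k * t) * (2 * exp (- \<alpha>\<^sup>2 / 4 * (p ^ k * (\<beta> * real n)))) ^ t)"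
    using assms(1-3,7) \<open>0 < p\<close> by (intro lemma4p4_property_failure_bound) auto
  also have "\<dots> = exp (real n * ln 2 +
      real t * (real k * ln (real n) + ln 2 + - \<alpha>\<^sup>2 / 4 * (p ^ k * (\<beta> * real n))))"
    using \<open>0 < real n\<close> by (rule failure_bound_eq_exp)
  also have "\<dots> \<le> exp (- (2 - 2 * ln 2) * real n + real k * ln (real n) + ln 2)"
    using failure_exponent_bound[OF assms(1,2,4,5) _ _ assms(6) t(1,2)] \<open>0 < p\<close>
      \<open>K * ln (real n) \<le> p ^ k * real n\<close> by simp
  finally show ?thesis by simp
qed

lemma exp_linear_log_tendsto_0:
  fixes c a b :: real
  assumes "0 < c"
  shows "(\<lambda>n. exp (- c * real n + a * ln (real n) + b)) \<longlonglongrightarrow> 0"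
  using assms by real_asymp

theorem lemma4p4:
  fixes k :: nat and \<alpha> \<beta> K :: real and p :: "nat \<Rightarrow> real"
  assumes "k \<ge> 1"
    and "0 < \<alpha>" "\<alpha> < 1" "0 < \<beta>" "\<beta> < 1"
    and "K = 12 * real k / (\<alpha>^2 * \<beta>)"
    and "\<forall>\<^sub>F n in sequentially. p n \<le> 1"
    and "\<forall>\<^sub>F n in sequentially. p n \<ge> (K * ln (real n) / real n) powr (1 / real k)"
  shows "(\<lambda>n. gnp_prob n (p n) (lemma4p4_property n k \<alpha> \<beta> K (p n)))
           \<longlonglongrightarrow> 1"
proof -
  let ?P = "\<lambda>n. gnp_prob n (p n) (lemma4p4_property n k \<alpha> \<beta> K (p n))"
  let ?R = "\<lambda>n. exp (- (2 - 2 * ln 2) * real n + real k * ln (real n) + ln 2)"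
  have "\<forall>\<^sub>F n in sequentially. 1 \<le> ln (real n)" by real_asymp
  with assms(7,8) have lower: "\<forall>\<^sub>F n in sequentially. 1 - ?R n \<le> ?P n"
  proof eventually_elim
    case (elim n)
    show ?case by (rule gnp_prob_lemma4p4_property_lower_bound[OF assms(1-4,6) elim(3,1,2)])
  qed
  have upper: "\<forall>\<^sub>F n in sequentially. ?P n \<le> 1"
    using assms(7,8) by eventually_elim (auto intro: gnp_prob_le_1 order_trans[OF powr_ge_zero])
  have "0 < 2 - 2 * ln (2::real)" using ln_2_less_1 by simp
  then have "?R \<longlonglongrightarrow> 0" by (rule exp_linear_log_tendsto_0)
  then have "(\<lambda>n. 1 - ?R n) \<longlonglongrightarrow> 1" using tendsto_diff[OF tendsto_const] by fastforce
  with lower upper show ?thesis by (rule tendsto_sandwich[OF _ _ _ tendsto_const])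
qed

end
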